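(* Let $\mathcal{P} \subseteq \{2,3,4,\dots\}$ be nonempty, let $\varrho$ be the minimal element of $\mathcal{P}$, and let $s \geq 0$ be real with $s>\sigma_\mathcal{P}$. Then for all integers $n\geq 2$ and $k \geq 1$, $$H_k(n,\mathcal{P}) \leq \frac{\zeta_\mathcal{P}(s)^{k-1}\, n^s}{\varrho^s}.$$
   Context: For $\mathcal{P} \subseteq \{2,3,\dots\}$ and $k\ge1$, $H_k(n,\mathcal{P})$ is the number of ordered $k$-tuples $(d_1,\dots,d_k)$ with $d_1\cdots d_k = n$ and every $d_i \in \mathcal{P}$ (so $H_1(n,\mathcal{P})=1$ if $n\in\mathcal{P}$ and $0$ otherwise). $\zeta_\mathcal{P}(s)=\sum_{m\in\mathcal{P}} m^{-s}$, and $\sigma_\mathcal{P}$ is its abscissa of convergence ($-\infty$ if $\mathcal{P}$ is finite). *)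

theory Defs
  imports "HOL-Analysis.Analysis" "HOL-Library.Extended_Real"
begin

definition H :: "nat \<Rightarrow> nat \<Rightarrow> nat set \<Rightarrow> nat" where
  "H k n P = card {ds :: nat list. length ds = k \<and> prod_list ds = n \<and> set ds \<subseteq> P}"

definition zetaP :: "nat set \<Rightarrow> real \<Rightarrow> real" where
  "zetaP P s = (\<Sum>\<^sub>\<infinity>m\<in>P. real m powr (-s))"

text \<open>Abscissa of convergence (as an extended real; -\<infinity> if P is finite).\<close>
definition sigmaP :: "nat set \<Rightarrow> ereal" where
  "sigmaP P = Inf (ereal ` {s::real. (\<lambda>m. real m powr (-s)) summable_on P})"

end

theory Submission
  imports Defs
begin

text \<open>Splitting off the first factor \<open>d\<close> of a tuple gives
  \<open>H\<^sub>k\<^sub>+\<^sub>1(n) \<le> (\<Sum>d\<in>P, d | n. H\<^sub>k(n/d))\<close>. Starting from \<open>H\<^sub>1(n) \<le> (n/\<rho>)\<^sup>s\<close>,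
  induction on \<open>k\<close> turns each step into a factor \<open>\<Sum>d\<in>P, d | n. d\<^sup>-\<^sup>s \<le> \<zeta>\<^sub>P(s)\<close>,
  since \<open>(n/d)\<^sup>s = n\<^sup>s d\<^sup>-\<^sup>s\<close>.\<close>

lemma summable_on_powr_if_sigmaP_less:
  fixes P :: "nat set" and s :: real
  assumes "0 \<notin> P" and "sigmaP P < ereal s"
  shows "(\<lambda>m. real m powr (-s)) summable_on P"
proof -
  from assms(2) obtain t where t: "(\<lambda>m. real m powr (-t)) summable_on P" "t < s"
    unfolding sigmaP_def Inf_less_iff by auto
  show ?thesis
  proof (rule summable_on_comparison_test[OF t(1)])
    fix m assume "m \<in> P"
    then have "real m \<ge> 1" using assms(1) by (cases m) auto
    then show "real m powr (-s) \<le> real m powr (-t)" using t(2) by (intro powr_mono) auto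
  qed auto
qed

lemma zetaP_nonneg: "zetaP P s \<ge> 0"
  unfolding zetaP_def by (rule infsum_nonneg) auto

lemma sum_powr_le_zetaP:
  assumes "(\<lambda>m. real m powr (-s)) summable_on P" and "finite D" and "D \<subseteq> P"
  shows "(\<Sum>d\<in>D. real d powr (-s)) \<le> zetaP P s"
  unfolding zetaP_def using assms by (intro finite_sum_le_infsum) auto

lemma H_one: "H (Suc 0) n P = (if n \<in> P then 1 else 0)"
proof -
  have "{ds :: nat list. length ds = Suc 0 \<and> prod_list ds = n \<and> set ds \<subseteq> P}
      = (if n \<in> P then {[n]} else {})"
    by (auto simp: length_Suc_conv)
  then show ?thesis unfolding H_def by simp
qed

lemma tuples_Suc_eq_UN_first_factor:
  assumes "0 \<notin> P"
  shows "{ds :: nat list. length ds = Suc k \<and> prod_list ds = n \<and> set ds \<subseteq> P}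
       = (\<Union>d\<in>{d\<in>P. d dvd n}. (#) d ` {ds. length ds = k \<and> prod_list ds = n div d \<and> set ds \<subseteq> P})"
    (is "?L = ?R")
proof
  show "?L \<subseteq> ?R"
  proof
    fix xs assume "xs \<in> ?L"
    then obtain d ds where xs: "xs = d # ds" "length ds = k" "d * prod_list ds = n"
        "d \<in> P" "set ds \<subseteq> P"
      by (cases xs) auto
    have "d > 0" using xs(4) assms by (cases d) auto
    then have "prod_list ds = n div d" using xs(3) by auto
    moreover have "d dvd n" using xs(3) by auto
    ultimately show "xs \<in> ?R" using xs by auto
  qed
  show "?R \<subseteq> ?L" by auto
qed

lemma H_Suc_le_sum_divisors:
  assumes "0 \<notin> P" and "n > 0"
  shows "H (Suc k) n P \<le> (\<Sum>d\<in>{d\<in>P. d dvd n}. H k (n div d) P)"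
proof -
  have "finite {d\<in>P. d dvd n}"
    using assms(2) by (rule finite_subset[OF _ finite_divisors_nat, rotated]) auto
  then have "H (Suc k) n P
      \<le> (\<Sum>d\<in>{d\<in>P. d dvd n}.
            card ((#) d ` {ds. length ds = k \<and> prod_list ds = n div d \<and> set ds \<subseteq> P}))"
    unfolding H_def tuples_Suc_eq_UN_first_factor[OF assms(1)] by (rule card_UN_le)
  also have "\<dots> = (\<Sum>d\<in>{d\<in>P. d dvd n}. H k (n div d) P)"
    unfolding H_def by (intro sum.cong refl card_image) auto
  finally show ?thesis .
qed

lemma H_Suc_le_zetaP_power:
  fixes P :: "nat set" and s \<rho> :: real
  assumes "0 \<notin> P" and "s \<ge> 0" and "(\<lambda>m. real m powr (-s)) summable_on P"
    and "\<rho> > 0" and "\<And>m. m \<in> P \<Longrightarrow> \<rho> \<le> real m"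
    and "n > 0"
  shows "real (H (Suc k) n P) \<le> zetaP P s ^ k * real n powr s / \<rho> powr s"
  using assms(6)
proof (induction k arbitrary: n)
  case 0
  have "\<rho> powr s \<le> real n powr s" if "n \<in> P"
    using assms(2,4,5) that by (intro powr_mono2) auto
  then show ?case using assms(4) by (auto simp: H_one)
next
  case (Suc k)
  define D where "D = {d\<in>P. d dvd n}"
  define c where "c = zetaP P s ^ k * real n powr s / \<rho> powr s"
  have finD: "finite D"
    unfolding D_def using Suc.prems by (rule finite_subset[OF _ finite_divisors_nat, rotated]) auto
  have "real (H (Suc (Suc k)) n P) \<le> (\<Sum>d\<in>D. real (H (Suc k) (n div d) P))"
    using H_Suc_le_sum_divisors[OF assms(1) Suc.prems] unfolding D_def of_nat_sum[symmetric]
    by (rule of_nat_mono)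
  also have "\<dots> \<le> (\<Sum>d\<in>D. c * real d powr (-s))"
  proof (rule sum_mono)
    fix d assume "d \<in> D"
    then have "d dvd n" and "d > 0" using assms(1) by (auto simp: D_def intro: gr0I)
    then have "n div d > 0" and "real (n div d) = real n / real d"
      using Suc.prems by (auto simp: real_of_nat_div dvd_div_eq_0_iff)
    with Suc.IH[of "n div d"] \<open>d > 0\<close> show "real (H (Suc k) (n div d) P) \<le> c * real d powr (-s)"
      by (simp add: c_def powr_divide powr_minus_divide mult.commute)
  qed
  also have "\<dots> = c * (\<Sum>d\<in>D. real d powr (-s))"
    by (simp add: sum_distrib_left)
  also have "\<dots> \<le> c * zetaP P s"
    using sum_powr_le_zetaP[OF assms(3) finD] zetaP_nonneg assms(4)
    by (intro mult_left_mono) (auto simp: D_def c_def)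
  finally show ?case by (simp add: c_def mult_ac)
qed

theorem lemma2p2:
  fixes P :: "nat set" and s :: real and n k :: nat
  assumes "P \<subseteq> {2..}" and "P \<noteq> {}"
    and "s \<ge> 0" and "ereal s > sigmaP P"
    and "n \<ge> 2" and "k \<ge> 1"
  shows "real (H k n P) \<le> zetaP P s ^ (k - 1) * real n powr s / real (LEAST m. m \<in> P) powr s"
proof -
  have "0 \<notin> P" using assms(1) by auto
  define \<rho> where "\<rho> = (LEAST m. m \<in> P)"
  have "\<rho> \<in> P" using assms(2) unfolding \<rho>_def by (metis LeastI ex_in_conv)
  then have "real \<rho> > 0" using \<open>0 \<notin> P\<close> by (cases \<rho>) auto
  have "real \<rho> \<le> real m" if "m \<in> P" for m
    using that unfolding \<rho>_def by (simp add: Least_le)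
  moreover obtain j where "k = Suc j" using assms(6) by (cases k) auto
  ultimately show ?thesis
    using H_Suc_le_zetaP_power[OF \<open>0 \<notin> P\<close> assms(3)
        summable_on_powr_if_sigmaP_less[OF \<open>0 \<notin> P\<close> assms(4)] \<open>real \<rho> > 0\<close>, of n j]
      assms(5) unfolding \<rho>_def by simp
qed

end
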